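(* Let $d\geqslant 1$ be an integer and $x$ a real number with $d+1\leqslant x/2$. Then $$\sum_{K_{d+1}-d-1<k\leqslant K_{d+1}}\Big(d^2\lfloor x/k\rfloor+\frac{2dx}{\lfloor x/k\rfloor}-x^2F(x/k)\Big)=\frac{8d^2+4d-1}{3}\sqrt{(d+1)x}+O(d^{7/2}x^{-1/2})+O(d^2),$$ where $k$ runs over integers, with absolute implied constants.
   Context: $\lfloor\cdot\rfloor$ denotes the integer part. For an integer $d\geqslant 0$ and real $x>0$, $K_d=K_d(x)=\big\lfloor \big(d+\sqrt{d^2+4dx}\,\big)/2\big\rfloor$. For real $t$, $F(t)=\sum_{n>t-1}\frac{1}{n^2(n+1)^2}$, summed over positive integers $n>t-1$. *)

theory Defs
  imports Complex_Main
begin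

definition K :: "nat \<Rightarrow> real \<Rightarrow> int" where
  "K d x = \<lfloor>(real d + sqrt ((real d)^2 + 4 * real d * x)) / 2\<rfloor>"

definition F :: "real \<Rightarrow> real" where
  "F t = (\<Sum>n. if n \<ge> 1 \<and> real n > t - 1 then 1 / ((real n)^2 * (real n + 1)^2) else 0)"

end

theory Submission
  imports Defs
begin

text \<open>Write D = d + 1 and s = sqrt (D x). Then K_D is the integer part of the positive root R
  of R (R - D) = D x, and s \<le> R \<le> s + D, so the D summation indices k satisfy |k - s| \<le> 3 D.
  Telescoping 1/(n^2 (n+1)^2) = 1/(3 n^3) - 1/(3 (n+1)^3) - 1/(3 n^3 (n+1)^3) gives
  F t = 1/(3 m^3) + O(m^-5) for m = \<lfloor>t\<rfloor>, so with m = \<lfloor>x/k\<rfloor> the summand is \<phi>(m) + O(D^3/s),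
  where \<phi>(u) = d^2 u + 2 d x/u - x^2/(3 u^3). As \<phi>'(x/s) = (D - d)^2 = 1 and 0 \<le> x/k - m < 1,
  \<phi>(m) = \<phi>(x/k) + O(1 + D^3/s); and k \<mapsto> \<phi>(x/k) has slope -1/D at k = s, so
  \<phi>(x/k) = \<phi>(x/s) + O(1 + D^3/s). Finally D \<phi>(x/s) = (8 d^2 + 4 d - 1) s/3, and the
  accumulated error O(D + D^4/s) is O(d^2 + d^(7/2) x^(-1/2)).\<close>

lemma inverse_cube_pair_le:
  fixes n :: real assumes "n > 0"
  shows "1 / (n^3 * (n+1)^3) \<le> 1/n^5 - 1/(n+1)^5"
proof -
  have "(n+1)^5 - n^5 - n^2*(n+1)^2 = 4*n^4 + 8*n^3 + 9*n^2 + 5*n + 1"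
    by (simp add: algebra_simps power2_eq_square power3_eq_cube power4_eq_xxxx power_def)
  then have "n^2 * (n+1)^2 \<le> (n+1)^5 - n^5"
    using assms by (smt (verit) zero_less_power)
  then have "(n^2 * (n+1)^2) / (n^5 * (n+1)^5) \<le> ((n+1)^5 - n^5) / (n^5 * (n+1)^5)"
    using assms by (simp add: divide_right_mono)
  then show ?thesis
    using assms by (simp add: diff_divide_distrib power_add [symmetric] numeral_eq_Suc)
qed

lemma inverse_power_telescope_sums:
  assumes "m > 0" "k > 0"
  shows "(\<lambda>i. 1 / real (i + m)^k - 1 / (real (i + m) + 1)^k) sums (1 / real m^k)"
proof -
  have "(\<lambda>i. (1 / real (i + m))^k) \<longlonglongrightarrow> 0^k"
    by (intro tendsto_power LIMSEQ_ignore_initial_segment lim_1_over_n)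
  then have "(\<lambda>i. 1 / real (i + m)^k) \<longlonglongrightarrow> 0"
    using assms(2) by (simp add: power_one_over zero_power)
  from telescope_sums'[OF this] show ?thesis
    by (simp add: add.commute)
qed

lemma inverse_square_pair_tail_sums:
  fixes m :: nat assumes "m > 0"
  obtains s where "(\<lambda>i. 1 / ((real (i + m))^2 * (real (i + m) + 1)^2)) sums s"
    and "1/(3*real m^3) - 1/(3*real m^5) \<le> s" and "s \<le> 1/(3*real m^3)"
proof -
  let ?e = "\<lambda>i. 1 / ((real (i + m))^3 * (real (i + m) + 1)^3)"
  have pos: "real (i + m) > 0" for i using assms by simp
  have e_le: "?e i \<le> 1 / real (i + m)^5 - 1 / (real (i + m) + 1)^5" for i
    using inverse_cube_pair_le[OF pos] .
  have tel5: "(\<lambda>i. 1 / real (i + m)^5 - 1 / (real (i + m) + 1)^5) sums (1 / real m^5)"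
    using inverse_power_telescope_sums[OF assms] by simp
  have "summable ?e"
    by (rule summable_comparison_test[OF _ sums_summable[OF tel5]]) (use e_le in auto)
  then have e_sums: "?e sums suminf ?e" by (rule summable_sums)
  have e_bounds: "0 \<le> suminf ?e" "suminf ?e \<le> 1 / real m^5"
    using suminf_nonneg[OF \<open>summable ?e\<close>] sums_le[OF e_le e_sums tel5] by auto
  have tel3: "(\<lambda>i. (1 / real (i + m)^3 - 1 / (real (i + m) + 1)^3) / 3) sums (1 / real m^3 / 3)"
    using sums_divide[OF inverse_power_telescope_sums[OF assms, of 3]] by simp
  have "(\<lambda>i. (1 / real (i + m)^3 - 1 / (real (i + m) + 1)^3) / 3 - ?e i / 3)
      sums (1 / real m^3 / 3 - suminf ?e / 3)"
    by (intro sums_diff tel3 sums_divide e_sums)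
  moreover have "(1 / real (i + m)^3 - 1 / (real (i + m) + 1)^3) / 3 - ?e i / 3
      = 1 / ((real (i + m))^2 * (real (i + m) + 1)^2)" for i
    using pos[of i] by (simp add: field_simps) algebra
  ultimately show ?thesis
    using e_bounds by (intro that[of "1 / real m^3 / 3 - suminf ?e / 3"]) auto
qed

lemma F_eq_tail_sum:
  assumes "t \<ge> 1"
    and "(\<lambda>i. 1 / ((real (i + nat \<lfloor>t\<rfloor>))^2 * (real (i + nat \<lfloor>t\<rfloor>) + 1)^2)) sums s"
  shows "F t = s"
proof -
  define g where
    "g = (\<lambda>n::nat. if n \<ge> 1 \<and> real n > t - 1 then 1 / ((real n)^2 * (real n + 1)^2) else 0)"
  have range: "n \<ge> 1 \<and> real n > t - 1 \<longleftrightarrow> nat \<lfloor>t\<rfloor> \<le> n" for n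
    using assms(1) by linarith
  have "g (i + nat \<lfloor>t\<rfloor>) = 1 / ((real (i + nat \<lfloor>t\<rfloor>))^2 * (real (i + nat \<lfloor>t\<rfloor>) + 1)^2)" for i
    using range[of "i + nat \<lfloor>t\<rfloor>"] by (simp only: g_def le_add2 simp_thms if_True)
  with assms(2) have "(\<lambda>i. g (i + nat \<lfloor>t\<rfloor>)) sums s"
    by simp
  moreover have "g i = 0" if "i < nat \<lfloor>t\<rfloor>" for i
    using range[of i] that unfolding g_def by auto
  ultimately have "g sums s"
    using sums_iff_shift[of g "nat \<lfloor>t\<rfloor>" s] by simp
  then show ?thesis
    unfolding F_def g_def[symmetric] by (rule sums_unique[symmetric])
qed

lemma F_bounds:
  assumes "t \<ge> 1"
  shows "1/(3*(of_int \<lfloor>t\<rfloor>)^3) - 1/(3*(of_int \<lfloor>t\<rfloor>)^5) \<le> F t"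
    and "F t \<le> 1/(3*(of_int \<lfloor>t\<rfloor>::real)^3)"
proof -
  have pos: "nat \<lfloor>t\<rfloor> > 0" and m: "real (nat \<lfloor>t\<rfloor>) = of_int \<lfloor>t\<rfloor>"
    using assms by auto
  obtain s where
      "(\<lambda>i. 1 / ((real (i + nat \<lfloor>t\<rfloor>))^2 * (real (i + nat \<lfloor>t\<rfloor>) + 1)^2)) sums s"
      "1/(3*real (nat \<lfloor>t\<rfloor>)^3) - 1/(3*real (nat \<lfloor>t\<rfloor>)^5) \<le> s"
      "s \<le> 1/(3*real (nat \<lfloor>t\<rfloor>)^3)"
    using inverse_square_pair_tail_sums[OF pos] by blast
  with F_eq_tail_sum[OF assms] m
  show "1/(3*(of_int \<lfloor>t\<rfloor>)^3) - 1/(3*(of_int \<lfloor>t\<rfloor>)^5) \<le> F t"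
    and "F t \<le> 1/(3*(of_int \<lfloor>t\<rfloor>::real)^3)"
    by auto
qed

definition phi :: "real \<Rightarrow> real \<Rightarrow> real \<Rightarrow> real" where
  "phi d x u = d^2 * u + 2 * d * x / u - x^2 / (3 * u^3)"

lemma phi_diff_eq:
  fixes d x u m :: real assumes "x > 0" "u > 0" "m > 0"
  shows "phi d x m - phi d x u
    = (u - m) * (2*d*(x/u^2)*(u/m) - d^2 - (x/u^2)^2*((u/m)^3 + (u/m)^2 + u/m)/3)"
  using assms unfolding phi_def by (simp add: field_simps) algebra

lemma phi_expand_at_root:
  fixes x k s D :: real
  assumes "x > 0" "k > 0" "s > 0" "D > 0" "s^2 = D*x"
  shows "phi (D - 1) x (x/k) - phi (D - 1) x (x/s)
       = -(k - s)/D + (k - s)^2 * ((D - 1)^2*x/(k*s^2) - (k + 2*s)/(3*x))"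
proof -
  have x: "x = s^2/D" using assms by (simp add: field_simps)
  show ?thesis using assms(2-4) unfolding phi_def x
    by (simp add: field_simps) algebra
qed

lemma phi_at_root:
  fixes x s D :: real
  assumes "x > 0" "s > 0" "D > 0" "s^2 = D*x"
  shows "D * phi (D - 1) x (x/s) = (8*(D-1)^2 + 4*(D-1) - 1)/3 * s"
proof -
  have x: "x = s^2/D" using assms by (simp add: field_simps)
  show ?thesis using assms(2,3) unfolding phi_def x
    by (simp add: field_simps) algebra
qed

text \<open>By \<open>phi_diff_eq\<close> with \<open>a = x/u\<^sup>2\<close>, \<open>r = u/m\<close>, the expression below is the
  difference quotient of \<open>phi\<close>; it equals \<open>-1\<close> at \<open>a = D\<close>, \<open>r = 1\<close>.\<close>

lemma slope_deviation_bound: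
  fixes D a r q :: real
  assumes D: "D \<ge> 2" and q: "q > 0"
    and a: "0 \<le> a" "a \<le> 4*D" "\<bar>a - D\<bar> \<le> 9*D*q"
    and r: "1 \<le> r" "r \<le> 2" "r - 1 \<le> 4*q"
  shows "\<bar>2*(D - 1)*a*r - (D - 1)^2 - a^2*(r^3 + r^2 + r)/3 + 1\<bar> \<le> 330*(D^2*q)"
proof -
  have lin: "\<bar>a*r - D\<bar> \<le> 25*D*q"
  proof -
    have "a*r - D = a*(r - 1) + (a - D)"
      by (simp add: algebra_simps)
    then have "\<bar>a*r - D\<bar> \<le> a*(r - 1) + \<bar>a - D\<bar>"
      using abs_triangle_ineq[of "a*(r - 1)" "a - D"] a r by simp
    moreover have "a*(r - 1) \<le> (4*D)*(4*q)"
      using a r by (intro mult_mono) auto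
    ultimately show ?thesis using a by simp
  qed
  have cubic: "0 \<le> r^3 + r^2 + r - 3" "r^3 + r^2 + r - 3 \<le> 11*(r - 1)"
  proof -
    have e: "r^3 + r^2 + r - 3 = (r - 1)*(r^2 + 2*r + 3)"
      by (simp add: algebra_simps power2_eq_square power3_eq_cube)
    have "r^2 \<le> 2^2" using r by (intro power_mono) auto
    then have "(r - 1)*(r^2 + 2*r + 3) \<le> (r - 1)*11"
      using r by (intro mult_left_mono) auto
    then show "0 \<le> r^3 + r^2 + r - 3" "r^3 + r^2 + r - 3 \<le> 11*(r - 1)"
      unfolding e using r by (simp_all add: mult.commute)
  qed
  have a_sq: "a^2 \<le> 16*D^2"
    using power_mono[OF a(2) a(1), of 2] by (simp add: power_mult_distrib)
  have cubic_term: "\<bar>a^2*(r^3 + r^2 + r - 3)\<bar> \<le> 704*(D^2*q)"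
  proof -
    have "\<bar>a^2*(r^3 + r^2 + r - 3)\<bar> = a^2*(r^3 + r^2 + r - 3)"
      using cubic by simp
    also have "\<dots> \<le> (16*D^2)*(11*(4*q))"
      using a_sq cubic r by (intro mult_mono) auto
    finally show ?thesis by simp
  qed
  have square_term: "\<bar>a^2 - D^2\<bar> \<le> 45*(D^2*q)"
  proof -
    have "a^2 - D^2 = (a - D)*(a + D)"
      by (simp add: power2_eq_square algebra_simps)
    then have "\<bar>a^2 - D^2\<bar> = \<bar>a - D\<bar>*(a + D)"
      using a D by (simp add: abs_mult)
    also have "\<dots> \<le> (9*D*q)*(5*D)"
      using a D by (intro mult_mono) auto
    finally show ?thesis by (simp add: power2_eq_square mult_ac)
  qed
  have "\<bar>2*(D - 1)*(a*r - D)\<bar> = 2*(D - 1)*\<bar>a*r - D\<bar>"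
    using D by (simp add: abs_mult)
  also have "\<dots> \<le> (2*D)*(25*D*q)"
    using lin D by (intro mult_mono) auto
  finally have linear_term: "\<bar>2*(D - 1)*(a*r - D)\<bar> \<le> 50*(D^2*q)"
    by (simp add: power2_eq_square mult_ac)
  moreover have "2*(D - 1)*a*r - (D - 1)^2 - a^2*(r^3 + r^2 + r)/3 + 1
      = 2*(D - 1)*(a*r - D) - a^2*(r^3 + r^2 + r - 3)/3 - (a^2 - D^2)"
    by (simp add: field_simps power2_eq_square)
  ultimately show ?thesis
    using cubic_term square_term q by (simp add: abs_le_iff)
qed

text \<open>Here \<open>D\<close> stands for \<open>d + 1\<close> and \<open>s\<close> for \<open>sqrt (D*x)\<close>; the estimates are uniform
  in terms of \<open>q = D/s\<close>.\<close>

locale window_point =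
  fixes D x s k :: real
  assumes D_ge_2: "D \<ge> 2" and x_pos: "x > 0" and s_pos: "s > 0" and s_sq: "s^2 = D*x"
    and k_bounds: "s/4 \<le> k" "k \<le> 2*s" "\<bar>k - s\<bar> \<le> 3*D" and quotient_ge_1: "1 \<le> x/k"
begin

abbreviation m :: real where "m \<equiv> of_int \<lfloor>x/k\<rfloor>"
definition q :: real where "q = D/s"

lemma q_pos: "q > 0"
  unfolding q_def using D_ge_2 s_pos s_sq by simp

lemma k_pos: "k > 0"
  using k_bounds s_pos s_sq by linarith

lemma m_ge_1: "m \<ge> 1"
  using quotient_ge_1 by simp

lemma floor_quotient_neq_0: "\<lfloor>x/k\<rfloor> \<noteq> 0"
  using m_ge_1 by (metis of_int_0 not_one_le_zero)

lemma m_le: "m \<le> x/k" and less_m_plus_1: "x/k < m + 1"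
  by linarith+

lemma s_div_x: "s/x = q"
  unfolding q_def using s_pos s_sq x_pos by (simp add: field_simps power2_eq_square)

lemma inverse_m_le: "1/m \<le> 4*q"
proof -
  have "x/(2*s) \<le> x/k"
    using k_bounds k_pos x_pos by (intro divide_left_mono) auto
  moreover have "x/(2*s) = 1/(2*q)"
    unfolding s_div_x[symmetric] by simp
  ultimately have "1/(2*q) < 2*m"
    using less_m_plus_1 m_ge_1 by linarith
  then show ?thesis
    using q_pos m_ge_1 by (simp add: field_simps)
qed

lemma phi_floor_estimate:
  "\<bar>phi (D - 1) x m - phi (D - 1) x (x/k)\<bar> \<le> 1 + 330*(D^2*q)"
proof -
  define a where "a = x/(x/k)^2"
  define r where "r = (x/k)/m"
  have a_eq: "a = k^2/x" unfolding a_def using x_pos k_pos by (simp add: field_simps power2_eq_square)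
  have a_le: "a \<le> 4*D"
  proof -
    have "k^2 \<le> (2*s)^2" using k_pos k_bounds by (intro power_mono) auto
    then show ?thesis unfolding a_eq using s_pos s_sq x_pos by (simp add: power_mult_distrib pos_divide_le_eq mult_ac)
  qed
  have a_near: "\<bar>a - D\<bar> \<le> 9*D*q"
  proof -
    have "a - D = (k - s)*(k + s)/x"
      unfolding a_eq using s_pos s_sq x_pos by (simp add: field_simps power2_eq_square)
    then have "\<bar>a - D\<bar> = \<bar>k - s\<bar>*(k + s)/x"
      using s_pos s_sq x_pos k_pos by (simp add: abs_mult)
    also have "\<dots> \<le> (3*D)*(3*s)/x"
      using k_bounds k_pos s_pos s_sq x_pos by (intro divide_right_mono mult_mono) auto
    also have "\<dots> = 9*D*(s/x)"
      by simp
    finally show ?thesis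
      unfolding s_div_x .
  qed
  define \<theta> where "\<theta> = x/k - m"
  have \<theta>: "0 \<le> \<theta>" "\<theta> < 1"
    unfolding \<theta>_def using m_le less_m_plus_1 by linarith+
  have "r = 1 + \<theta>/m"
    unfolding r_def \<theta>_def by (simp add: diff_divide_distrib floor_quotient_neq_0)
  moreover have "0 \<le> \<theta>/m" "\<theta>/m \<le> 1/m" "1/m \<le> 1"
    using \<theta> m_ge_1 by (auto simp: divide_right_mono)
  ultimately have r: "1 \<le> r" "r \<le> 2" "r - 1 \<le> 4*q"
    using inverse_m_le by auto
  define B where "B = 2*(D - 1)*a*r - (D - 1)^2 - a^2*(r^3 + r^2 + r)/3"
  have "\<bar>B + 1\<bar> \<le> 330*(D^2*q)"
    unfolding B_def using slope_deviation_bound[OF D_ge_2 q_pos _ a_le a_near r] x_pos a_eq by simp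
  then have B_bound: "\<bar>B\<bar> \<le> 1 + 330*(D^2*q)"
    by (simp add: abs_le_iff)
  have "phi (D - 1) x m - phi (D - 1) x (x/k) = \<theta> * B"
    unfolding a_def r_def \<theta>_def B_def using phi_diff_eq[of x "x/k" m "D - 1"] x_pos k_pos m_ge_1 by simp
  moreover have "\<bar>\<theta> * B\<bar> \<le> \<bar>B\<bar>"
    using \<theta> by (simp add: abs_mult mult_left_le_one_le)
  ultimately show ?thesis
    using B_bound by linarith
qed

lemma F_correction_bound:
  "\<bar>x^2 * F (x/k) - x^2/(3*m^3)\<bar> \<le> 342*(D^2*q)"
proof -
  have F: "1/(3*m^3) - 1/(3*m^5) \<le> F (x/k)" "F (x/k) \<le> 1/(3*m^3)"
    using F_bounds[OF quotient_ge_1] by auto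
  have "\<bar>x^2 * F (x/k) - x^2/(3*m^3)\<bar> = x^2 * (1/(3*m^3) - F (x/k))"
    using F(2) mult_left_mono[OF F(2), of "x^2"] by (simp add: algebra_simps)
  also have "\<dots> \<le> x^2 * ((1/m)^5/3)"
    using F(1) by (intro mult_left_mono) (auto simp: power_one_over)
  also have "\<dots> \<le> x^2 * ((4*q)^5/3)"
    using inverse_m_le m_ge_1 by (intro mult_left_mono divide_right_mono power_mono) auto
  also have "x^2 * ((4*q)^5/3) = (1024/3)*(x^2*q^5)"
    by (simp add: power_mult_distrib)
  also have "\<dots> = (1024/3)*(D^2*q)"
  proof -
    have "x*q^2 = D"
      unfolding q_def using s_pos s_sq x_pos D_ge_2 by (simp add: field_simps power2_eq_square)
    moreover have "x^2*q^5 = (x*q^2)^2*q"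
      by (simp add: power_mult_distrib power2_eq_square power_def numeral_eq_Suc algebra_simps)
    ultimately show ?thesis
      by simp
  qed
  also have "\<dots> \<le> 342*(D^2*q)"
    using q_pos by (intro mult_right_mono) auto
  finally show ?thesis .
qed

lemma phi_near_root_estimate:
  "\<bar>phi (D - 1) x (x/k) - phi (D - 1) x (x/s)\<bar> \<le> 3 + 36*(D^2*q)"
proof -
  have linear: "\<bar>-(k - s)/D\<bar> \<le> 3"
    using k_bounds D_ge_2 by (simp add: abs_divide pos_divide_le_eq)
  have "(D - 1)^2*x/(k*s^2) = (D - 1)^2/(D*k)"
    using s_pos s_sq x_pos by simp
  also have "\<dots> \<le> D^2/(D*k)"
    using D_ge_2 k_pos by (intro divide_right_mono power_mono) auto
  also have "\<dots> \<le> 4*q"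
    unfolding q_def using D_ge_2 k_bounds k_pos s_pos s_sq by (simp add: power2_eq_square field_simps)
  finally have c1: "(D - 1)^2*x/(k*s^2) \<le> 4*q" .
  have "(k + 2*s)/(3*x) \<le> (4*s)/(3*x)"
    using k_bounds x_pos by (intro divide_right_mono) auto
  also have "\<dots> = (4/3)*(s/x)"
    by simp
  finally have c2: "(k + 2*s)/(3*x) \<le> (4/3)*q"
    unfolding s_div_x .
  have "0 \<le> (D - 1)^2*x/(k*s^2)" "0 \<le> (k + 2*s)/(3*x)"
    using k_pos s_pos s_sq x_pos D_ge_2 by simp_all
  with c1 c2 have "\<bar>(D - 1)^2*x/(k*s^2) - (k + 2*s)/(3*x)\<bar> \<le> 4*q"
    by (intro abs_leI) linarith+
  moreover have "(k - s)^2 \<le> 9*D^2"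
    using power_mono[OF k_bounds(3), of 2] by (simp add: power_mult_distrib)
  ultimately have
    "\<bar>(k - s)^2 * ((D - 1)^2*x/(k*s^2) - (k + 2*s)/(3*x))\<bar> \<le> (9*D^2)*(4*q)"
    unfolding abs_mult by (intro mult_mono) auto
  then have quadratic: "\<bar>(k - s)^2 * ((D - 1)^2*x/(k*s^2) - (k + 2*s)/(3*x))\<bar> \<le> 36*(D^2*q)"
    by (simp add: mult_ac)
  have "D > 0"
    using D_ge_2 by simp
  then show ?thesis
    unfolding phi_expand_at_root[OF x_pos k_pos s_pos \<open>D > 0\<close> s_sq]
    using abs_triangle_ineq[of "-(k - s)/D"] linear quadratic by linarith
qed

lemma summand_estimate:
  "\<bar>(D - 1)^2 * m + 2*(D - 1)*x/m - x^2 * F (x/k) - phi (D - 1) x (x/s)\<bar> \<le> 4 + 720*(D^2*q)"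
proof -
  have "(D - 1)^2 * m + 2*(D - 1)*x/m - x^2 * F (x/k) - phi (D - 1) x (x/s)
      = (phi (D - 1) x m - phi (D - 1) x (x/k)) - (x^2 * F (x/k) - x^2/(3*m^3))
        + (phi (D - 1) x (x/k) - phi (D - 1) x (x/s))"
    unfolding phi_def by simp
  then show ?thesis
    using phi_floor_estimate F_correction_bound phi_near_root_estimate q_pos
      zero_le_power2[of D] mult_nonneg_nonneg[of "D^2" q]
    by (simp only: abs_le_iff) linarith
qed

end

lemma quadratic_root_bounds:
  fixes D x :: real
  assumes D: "D \<ge> 2" and x: "2*D \<le> x"
  defines "R \<equiv> (D + sqrt (D^2 + 4*D*x))/2"
  shows "sqrt (D*x) \<le> R" "R \<le> sqrt (D*x) + D" "2*D \<le> R" "R \<le> x" "D \<le> sqrt (D*x)"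
proof -
  define s where "s = sqrt (D*x)"
  have "D > 0" "x > 0" using D x by auto
  then have s: "s > 0" "s^2 = D*x"
    unfolding s_def by simp_all
  have "sqrt (D^2 + 4*D*x) \<ge> D"
    using \<open>D > 0\<close> \<open>x > 0\<close> by (intro real_le_rsqrt) simp
  then have R_ge: "R \<ge> D"
    unfolding R_def by simp
  have root: "R*(R - D) = D*x"
    unfolding R_def using \<open>D > 0\<close> \<open>x > 0\<close>
    by (simp add: field_simps power2_eq_square)
  have "(R - s)*(R + s) = D*R"
    using root s by (simp add: algebra_simps power2_eq_square)
  moreover have "R + s > 0"
    using s R_ge \<open>D > 0\<close> by linarith
  ultimately have "R - s = D*R/(R + s)"
    by (simp add: field_simps)
  moreover have "0 \<le> D*R/(R + s)" "D*R/(R + s) \<le> D"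
    using \<open>R + s > 0\<close> \<open>D > 0\<close> s R_ge by (simp_all add: pos_divide_le_eq)
  ultimately have "0 \<le> R - s" "R - s \<le> D"
    by simp_all
  then show "sqrt (D*x) \<le> R" "R \<le> sqrt (D*x) + D"
    unfolding s_def by simp_all
  show "2*D \<le> R"
  proof (rule ccontr)
    assume "\<not> 2*D \<le> R"
    then have "R*(R - D) < (2*D)*D"
      using R_ge \<open>D > 0\<close> by (intro mult_strict_mono) auto
    then show False
      using root x \<open>D > 0\<close> by (simp add: mult_le_cancel_left)
  qed
  show "R \<le> x"
  proof (rule ccontr)
    assume "\<not> R \<le> x"
    then have "x*(x - D) < R*(R - D)"
      using x \<open>D > 0\<close> by (intro mult_strict_mono) auto
    then show False
      using root x \<open>D > 0\<close> by (simp add: algebra_simps mult_le_cancel_left)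
  qed
  have "D*D \<le> D*x"
    using x \<open>D > 0\<close> by simp
  then show "D \<le> sqrt (D*x)"
    by (metis real_le_rsqrt power2_eq_square)
qed

lemma window_point_K:
  fixes d :: nat and x :: real and k :: int
  assumes d: "d \<ge> 1" and x: "real d + 1 \<le> x/2"
    and k: "k \<in> {K (d+1) x - int d - 1 <.. K (d+1) x}"
  shows "window_point (real d + 1) x (sqrt ((real d + 1) * x)) (of_int k)"
proof -
  define D where "D = real d + 1"
  define R where "R = (D + sqrt (D^2 + 4*D*x))/2"
  have D: "D \<ge> 2" and "2*D \<le> x"
    unfolding D_def using d x by auto
  note R = quadratic_root_bounds[OF this, folded R_def]
  have "K (d+1) x = \<lfloor>R\<rfloor>"
    unfolding K_def R_def D_def by (simp only: of_nat_add of_nat_1)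
  then have "R - D < of_int k" "of_int k \<le> R"
    using k unfolding D_def by (simp_all, linarith+)
  then show ?thesis
    unfolding D_def[symmetric] using D R
    by unfold_locales (auto simp: abs_le_iff le_divide_eq)
qed

lemma window_sum_estimate:
  fixes d :: nat and x :: real
  assumes d: "d \<ge> 1" and x: "real d + 1 \<le> x/2"
  defines "D \<equiv> real d + 1" and "s \<equiv> sqrt ((real d + 1) * x)"
  shows "\<bar>(\<Sum>k\<in>{K (d+1) x - int d - 1 <.. K (d+1) x}.
        (real d)^2 * of_int \<lfloor>x / of_int k\<rfloor>
        + 2 * real d * x / of_int \<lfloor>x / of_int k\<rfloor>
        - x^2 * F (x / of_int k))
      - (8 * (real d)^2 + 4 * real d - 1) / 3 * s\<bar>
    \<le> D * (4 + 720*(D^2*(D/s)))"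
proof -
  let ?S = "{K (d+1) x - int d - 1 <.. K (d+1) x}"
  let ?c = "phi (real d) x (x/s)"
  let ?f = "\<lambda>k. (real d)^2 * of_int \<lfloor>x / of_int k\<rfloor> + 2 * real d * x / of_int \<lfloor>x / of_int k\<rfloor>
        - x^2 * F (x / of_int k)"
  have card: "card ?S = D"
    unfolding D_def by simp
  have summand_bound: "\<bar>?f k - ?c\<bar> \<le> 4 + 720*(D^2*(D/s))" if "k \<in> ?S" for k
  proof -
    interpret window_point D x s "of_int k"
      unfolding D_def s_def by (rule window_point_K[OF d x that])
    show ?thesis
      using summand_estimate q_def unfolding D_def by simp
  qed
  have "D * ?c = (8 * (real d)^2 + 4 * real d - 1) / 3 * s"
    using phi_at_root[of x s D] x unfolding D_def s_def by simp
  then have main: "(\<Sum>k\<in>?S. ?c) = (8 * (real d)^2 + 4 * real d - 1) / 3 * s"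
    using card by simp
  have "\<bar>(\<Sum>k\<in>?S. ?f k) - (\<Sum>k\<in>?S. ?c)\<bar> = \<bar>\<Sum>k\<in>?S. ?f k - ?c\<bar>"
    by (simp only: sum_subtractf)
  also have "\<dots> \<le> (\<Sum>k\<in>?S. \<bar>?f k - ?c\<bar>)"
    by (rule sum_abs)
  also have "\<dots> \<le> (\<Sum>k\<in>?S. 4 + 720*(D^2*(D/s)))"
    by (rule sum_mono) (rule summand_bound)
  also have "\<dots> = D * (4 + 720*(D^2*(D/s)))"
    using card by simp
  finally show ?thesis
    unfolding main .
qed

lemma two_powr_7_2_le: "(2::real) powr (7/2) \<le> 12"
proof -
  have "(2::real) powr (7/2) = 2 powr (3 + 1/2)"
    by simp
  also have "\<dots> = 2 powr 3 * 2 powr (1/2)"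
    by (rule powr_add)
  also have "\<dots> = 8 * sqrt 2"
    by (simp add: powr_half_sqrt)
  also have "sqrt 2 \<le> sqrt (9/4)"
    by simp
  then have "8 * sqrt 2 \<le> 8 * (3/2::real)"
    by (simp add: real_sqrt_divide)
  finally show ?thesis
    by simp
qed

lemma window_error_le:
  fixes d x :: real
  assumes d: "d \<ge> 1" and x: "x > 0"
  defines "D \<equiv> d + 1"
  shows "D * (4 + 720*(D^2*(D/sqrt (D*x)))) \<le> 8640 * d powr (7/2) * x powr (-1/2) + 8 * d^2"
proof -
  have "D > 0" unfolding D_def using d by simp
  have "D powr (7/2) = D powr (4 - 1/2)"
    by simp
  also have "\<dots> = D powr 4 / D powr (1/2)"
    by (rule powr_diff)
  also have "\<dots> = D^4 / sqrt D"
    using powr_realpow[OF \<open>D > 0\<close>, of 4] \<open>D > 0\<close> by (simp add: powr_half_sqrt)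
  finally have "D^4 / sqrt (D*x) = D powr (7/2) * x powr (-1/2)"
    using x by (simp add: powr_minus_divide powr_half_sqrt real_sqrt_mult)
  moreover have "D * (720*(D^2*(D/sqrt (D*x)))) = 720 * (D^4 / sqrt (D*x))"
    by (simp add: eval_nat_numeral)
  ultimately have main: "D * (720*(D^2*(D/sqrt (D*x)))) = 720 * (D powr (7/2) * x powr (-1/2))"
    by simp
  have "D powr (7/2) \<le> (2*d) powr (7/2)"
    unfolding D_def using d by (intro powr_mono2) auto
  also have "\<dots> = 2 powr (7/2) * d powr (7/2)"
    using d by (simp add: powr_mult)
  also have "\<dots> \<le> 12 * d powr (7/2)"
    using two_powr_7_2_le by (intro mult_right_mono) auto
  finally have "720 * (D powr (7/2) * x powr (-1/2)) \<le> 720 * ((12 * d powr (7/2)) * x powr (-1/2))"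
    by (intro mult_left_mono mult_right_mono) auto
  then have "720 * (D powr (7/2) * x powr (-1/2)) \<le> 8640 * d powr (7/2) * x powr (-1/2)"
    by simp
  moreover have "4 * D \<le> 8 * d^2"
  proof -
    have "d \<le> d^2"
      using d by (simp add: power2_eq_square)
    with d show ?thesis
      unfolding D_def by (simp add: algebra_simps)
  qed
  ultimately show ?thesis
    using main by (simp only: distrib_left)
qed

theorem proposition8:
  shows "\<exists>C1 C2. \<forall>(d::nat) (x::real). d \<ge> 1 \<longrightarrow> real d + 1 \<le> x / 2 \<longrightarrow>
    \<bar>(\<Sum>k\<in>{K (d+1) x - int d - 1 <.. K (d+1) x}.
        (real d)^2 * of_int \<lfloor>x / of_int k\<rfloor>
        + 2 * real d * x / of_int \<lfloor>x / of_int k\<rfloor>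
        - x^2 * F (x / of_int k))
     - (8 * (real d)^2 + 4 * real d - 1) / 3 * sqrt ((real d + 1) * x)\<bar>
    \<le> C1 * real d powr (7/2) * x powr (-1/2) + C2 * (real d)^2"
proof (intro exI allI impI)
  fix d :: nat and x :: real
  assume d: "d \<ge> 1" and x: "real d + 1 \<le> x / 2"
  then have "x > 0"
    by simp
  with d window_sum_estimate[OF d x] window_error_le[of "real d" x]
  show "\<bar>(\<Sum>k\<in>{K (d+1) x - int d - 1 <.. K (d+1) x}.
        (real d)^2 * of_int \<lfloor>x / of_int k\<rfloor>
        + 2 * real d * x / of_int \<lfloor>x / of_int k\<rfloor>
        - x^2 * F (x / of_int k))
     - (8 * (real d)^2 + 4 * real d - 1) / 3 * sqrt ((real d + 1) * x)\<bar>
    \<le> 8640 * real d powr (7/2) * x powr (-1/2) + 8 * (real d)^2"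
    by simp
qed

end
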